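(* Let $\mathcal{L}$ be a finite-dimensional Lie algebra over a field $F$ such that $d(\mathcal{L}) = \dim_F(\mathcal{L})$. Then either $\mathcal{L}$ is abelian, or $\mathcal{L} = Fx \oplus \mathcal{A}$ for some $x \in \mathcal{L}$, where $\mathcal{A}$ is an abelian ideal of codimension $1$ in $\mathcal{L}$ and $\mathrm{ad}(x)|_{\mathcal{A}} = \mathrm{id}_{\mathcal{A}}$ (in particular $\mathcal{L}$ is metabelian).
   Context: $d(\mathcal{L})$ denotes the minimal number of generators of $\mathcal{L}$ as a Lie algebra. *)

theory Defs
  imports Complex_Main
begin

definition lie_algebra ::
  "('k::field \<Rightarrow> 'v::ab_group_add \<Rightarrow> 'v) \<Rightarrow> ('v \<Rightarrow> 'v \<Rightarrow> 'v) \<Rightarrow> bool" where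
  "lie_algebra scale br \<longleftrightarrow>
     vector_space scale \<and>
     (\<forall>x y z. br (x + y) z = br x z + br y z) \<and>
     (\<forall>x y z. br x (y + z) = br x y + br x z) \<and>
     (\<forall>c x y. br (scale c x) y = scale c (br x y)) \<and>
     (\<forall>c x y. br x (scale c y) = scale c (br x y)) \<and>
     (\<forall>x. br x x = 0) \<and>
     (\<forall>x y z. br x (br y z) + br y (br z x) + br z (br x y) = 0)"

definition finite_dim :: "('k::field \<Rightarrow> 'v::ab_group_add \<Rightarrow> 'v) \<Rightarrow> bool" where
  "finite_dim scale \<longleftrightarrow> (\<exists>B. finite B \<and> module.span scale B = UNIV)"

definition lie_subalgebra ::
  "('k::field \<Rightarrow> 'v::ab_group_add \<Rightarrow> 'v) \<Rightarrow> ('v \<Rightarrow> 'v \<Rightarrow> 'v) \<Rightarrow> 'v set \<Rightarrow> bool" where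
  "lie_subalgebra scale br S \<longleftrightarrow>
     module.subspace scale S \<and> (\<forall>x\<in>S. \<forall>y\<in>S. br x y \<in> S)"

definition lie_generated ::
  "('k::field \<Rightarrow> 'v::ab_group_add \<Rightarrow> 'v) \<Rightarrow> ('v \<Rightarrow> 'v \<Rightarrow> 'v) \<Rightarrow> 'v set \<Rightarrow> 'v set" where
  "lie_generated scale br X = \<Inter>{S. lie_subalgebra scale br S \<and> X \<subseteq> S}"

definition min_generators ::
  "('k::field \<Rightarrow> 'v::ab_group_add \<Rightarrow> 'v) \<Rightarrow> ('v \<Rightarrow> 'v \<Rightarrow> 'v) \<Rightarrow> nat" where
  "min_generators scale br =
     (LEAST n. \<exists>X. finite X \<and> card X = n \<and> lie_generated scale br X = UNIV)"

definition lie_ideal ::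
  "('k::field \<Rightarrow> 'v::ab_group_add \<Rightarrow> 'v) \<Rightarrow> ('v \<Rightarrow> 'v \<Rightarrow> 'v) \<Rightarrow> 'v set \<Rightarrow> bool" where
  "lie_ideal scale br I \<longleftrightarrow>
     module.subspace scale I \<and> (\<forall>y. \<forall>a\<in>I. br y a \<in> I)"

end

theory Submission imports Defs begin

(* Let L be a finite-dimensional Lie algebra with d(L) = dim L.
   (1) Every bracket [x,y] lies in span{x,y}: otherwise x, y, [x,y] are
       independent, extend them to a basis B, and B - {[x,y]} generates L as a
       Lie algebra with only dim L - 1 elements, contradicting d(L) = dim L.
   (2) In any Lie algebra with this "pair-closed" property which is not
       abelian, one finds x0 and w0 independent of x0 with
       [x0,w0] = w0 + r x0; comparing [x0,v], [x0,w0] and [x0,v+w0] then gives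
       [x0,v] = v + q x0 for every v.
   (3) Hence A = {v. [x0,v] = v} is a complement of the line F x0; by pair
       closure and the Jacobi identity A is abelian, so it is an ideal, and it
       has codimension one. *)

context vector_space
begin

lemma span_pair_combination:
  assumes "v \<in> span {x, y}"
  obtains a b where "v = scale a x + scale b y"
proof -
  from assms obtain k where "v - scale k x \<in> span {y}" by (auto simp: span_insert)
  then obtain m where "v - scale k x = scale m y" by (auto simp: span_singleton)
  then have "v = scale k x + scale m y" by (simp add: algebra_simps)
  then show ?thesis using that by blast
qed

lemma combination_in_span_pair: "scale a x + scale b y \<in> span {x, y}"
  by (intro span_add span_scale span_base) auto

lemma scale_solve: "a \<noteq> 0 \<Longrightarrow> scale a v = u \<Longrightarrow> v = scale (inverse a) u"
  by (metis scale_scale left_inverse scale_one)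

lemma independent_finite_dim:
  assumes "finite_dim scale" and "independent B"
  shows "finite B"
proof -
  obtain S where "finite S" "span S = UNIV"
    using assms(1) unfolding finite_dim_def by blast
  then show ?thesis using independent_span_bound[of S B] assms(2) by auto
qed

lemma independent_three:
  assumes "x \<noteq> 0" "y \<notin> span {x}" "z \<notin> span {x, y}"
  shows "independent {x, y, z}"
proof -
  have "x \<noteq> y" using assms(2) span_base[of x "{x}"] by auto
  have "z \<noteq> x" "z \<noteq> y"
    using assms(3) span_base[of x "{x, y}"] span_base[of y "{x, y}"] by auto
  have "independent {x}" using assms(1) by (simp add: independent_insert)
  then have "independent (insert y {x})"
    using assms(2) \<open>x \<noteq> y\<close> by (simp add: independent_insert)
  then have "independent (insert z (insert y {x}))"
    using assms(3) \<open>z \<noteq> x\<close> \<open>z \<noteq> y\<close> by (subst independent_insert) (auto simp: insert_commute)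
  then show ?thesis by (simp add: insert_commute)
qed

lemma dim_complement_of_line:
  assumes "finite_dim scale" and "subspace A" and "x \<notin> A"
    and decomp: "\<And>v. \<exists>c. \<exists>a\<in>A. v = scale c x + a"
  shows "dim A + 1 = dim UNIV"
proof -
  obtain B where B: "B \<subseteq> A" "independent B" "A \<subseteq> span B" "card B = dim A"
    using basis_exists by blast
  have "finite B" using independent_finite_dim[OF assms(1) B(2)] .
  have "x \<notin> span B" using span_minimal[OF B(1) assms(2)] assms(3) by blast
  have "UNIV \<subseteq> span (insert x B)"
  proof
    fix v
    obtain c a where "a \<in> A" and v: "v = scale c x + a" using decomp by blast
    then have "a \<in> span (insert x B)" using B(3) span_mono[of B "insert x B"] by blast
    moreover have "scale c x \<in> span (insert x B)" by (intro span_scale span_base) simp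
    ultimately show "v \<in> span (insert x B)" unfolding v by (intro span_add)
  qed
  then have "card (insert x B) = dim UNIV"
    using basis_card_eq_dim[OF subset_UNIV _ independent_insertI[OF \<open>x \<notin> span B\<close> B(2)]]
    by simp
  moreover have "x \<notin> B" using \<open>x \<notin> span B\<close> span_base[of x B] by blast
  ultimately show ?thesis using B(4) \<open>finite B\<close> by simp
qed

lemma lie_generated_by_adding_bracket:
  assumes "span B = UNIV" "x \<in> X" "y \<in> X" "B \<subseteq> insert (br x y) X"
  shows "lie_generated scale br X = UNIV"
proof -
  have "UNIV \<subseteq> S" if "lie_subalgebra scale br S" "X \<subseteq> S" for S
  proof -
    have "subspace S" and closed: "\<forall>a\<in>S. \<forall>b\<in>S. br a b \<in> S"
      using that(1) unfolding lie_subalgebra_def by auto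
    then have "br x y \<in> S" using that(2) assms(2,3) by blast
    then have "B \<subseteq> S" using assms(4) that(2) by blast
    then show ?thesis using span_minimal[OF _ \<open>subspace S\<close>] assms(1) by blast
  qed
  then show ?thesis unfolding lie_generated_def by blast
qed

end

lemma min_generators_le_card:
  assumes "finite X" "lie_generated scale br X = UNIV"
  shows "min_generators scale br \<le> card X"
  unfolding min_generators_def using assms by (intro Least_le) blast

locale lie_alg = vector_space scale
  for scale :: "'k::field \<Rightarrow> 'v::ab_group_add \<Rightarrow> 'v" (infixr \<open>*s\<close> 75) +
  fixes br :: "'v \<Rightarrow> 'v \<Rightarrow> 'v"
  assumes br_add_left: "br (x + y) z = br x z + br y z"
    and br_add_right: "br x (y + z) = br x y + br x z"
    and br_scale_left: "br (c *s x) y = c *s br x y"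
    and br_scale_right: "br x (c *s y) = c *s br x y"
    and br_self: "br x x = 0"
    and jacobi: "br x (br y z) + br y (br z x) + br z (br x y) = 0"
begin

lemma br_zero_left [simp]: "br 0 y = 0"
  using br_add_left[of 0 0 y] by simp

lemma br_zero_right [simp]: "br y 0 = 0"
  using br_add_right[of y 0 0] by simp

lemma br_anticomm: "br y x = - br x y"
proof -
  have "0 = br (x + y) (x + y)" by (rule br_self[symmetric])
  also have "\<dots> = br x x + br x y + (br y x + br y y)"
    by (simp add: br_add_left br_add_right add.assoc)
  finally have "br x y + br y x = 0" by (simp add: br_self)
  then show ?thesis by (simp add: eq_neg_iff_add_eq_0 add.commute)
qed

lemma br_minus_right: "br a (- b) = - br a b"
  using br_add_right[of a b "- b"] by (simp add: eq_neg_iff_add_eq_0 add.commute)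

lemma br_multiple_zero: "br x (c *s x) = 0" "br (c *s x) x = 0"
  by (simp_all add: br_scale_left br_scale_right br_self)

lemma bracket_in_span_pair:
  assumes fin: "finite_dim scale"
    and mg: "min_generators scale br = dim UNIV"
  shows "br x y \<in> span {x, y}"
proof (rule ccontr)
  define z where "z = br x y"
  assume "br x y \<notin> span {x, y}"
  then have z: "z \<notin> span {x, y}" by (simp add: z_def)
  have "x \<noteq> 0" using z span_zero by (auto simp: z_def)
  have "y \<notin> span {x}"
  proof
    assume "y \<in> span {x}"
    then obtain k where "y = k *s x" by (auto simp: span_singleton)
    then have "z \<in> span {x, y}" by (simp add: z_def br_multiple_zero span_zero)
    with z show False ..
  qed
  define B where "B = extend_basis {x, y, z}"
  have ind: "independent {x, y, z}" by (rule independent_three[OF \<open>x \<noteq> 0\<close> \<open>y \<notin> span {x}\<close> z])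
  have "{x, y, z} \<subseteq> B" "independent B" "span B = UNIV"
    unfolding B_def
    by (rule extend_basis_superset[OF ind], rule independent_extend_basis[OF ind],
        rule span_extend_basis[OF ind])
  have "finite B" using independent_finite_dim[OF fin \<open>independent B\<close>] .
  have "card B = dim UNIV"
    using basis_card_eq_dim[OF subset_UNIV _ \<open>independent B\<close>] \<open>span B = UNIV\<close> by simp
  have "x \<noteq> z" "y \<noteq> z" using z span_base[of x "{x, y}"] span_base[of y "{x, y}"] by auto
  moreover have "x \<noteq> y" using \<open>y \<notin> span {x}\<close> span_base[of x "{x}"] by auto
  ultimately have "card {x, y, z} = 3" by simp
  then have "card B \<ge> 3" using card_mono[OF \<open>finite B\<close> \<open>{x, y, z} \<subseteq> B\<close>] by simp
  have "B \<subseteq> insert (br x y) (B - {z})" by (auto simp: z_def)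
  moreover have "x \<in> B - {z}" "y \<in> B - {z}"
    using \<open>{x, y, z} \<subseteq> B\<close> \<open>x \<noteq> z\<close> \<open>y \<noteq> z\<close> by auto
  ultimately have "lie_generated scale br (B - {z}) = UNIV"
    by (intro lie_generated_by_adding_bracket[OF \<open>span B = UNIV\<close>])
  then have "min_generators scale br \<le> card (B - {z})"
    using \<open>finite B\<close> by (intro min_generators_le_card) auto
  then show False
    using mg \<open>card B = dim UNIV\<close> \<open>card B \<ge> 3\<close> \<open>{x, y, z} \<subseteq> B\<close> \<open>finite B\<close> by simp
qed

end

locale pair_closed_lie_alg = lie_alg +
  assumes pair_closed: "br x y \<in> span {x, y}"
begin

lemma normalized_pair:
  assumes "br u w \<noteq> 0"
  obtains x0 w0 r where "x0 \<noteq> 0" "w0 \<notin> span {x0}" "br x0 w0 = w0 + r *s x0"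
proof -
  obtain a b where ab: "br u w = a *s u + b *s w"
    using span_pair_combination[OF pair_closed] by blast
  have "w \<notin> span {u}"
  proof
    assume "w \<in> span {u}"
    then obtain k where "w = k *s u" by (auto simp: span_singleton)
    then show False using assms by (simp add: br_multiple_zero)
  qed
  have "u \<notin> span {w}"
  proof
    assume "u \<in> span {w}"
    then obtain k where "u = k *s w" by (auto simp: span_singleton)
    then show False using assms by (simp add: br_multiple_zero)
  qed
  show ?thesis
  proof (cases "b = 0")
    case False
    define x0 where "x0 = inverse b *s u"
    have "span {x0} \<subseteq> span {u}"
      by (intro span_minimal) (auto simp: x0_def intro: span_scale span_base)
    moreover have "br x0 w = w + a *s x0"
      using False by (simp add: x0_def br_scale_left ab algebra_simps mult.commute)
    moreover have "x0 \<noteq> 0" using assms False by (auto simp: x0_def)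
    ultimately show ?thesis using that \<open>w \<notin> span {u}\<close> by blast
  next
    case True
    then have "a \<noteq> 0" using assms ab by auto
    define x0 where "x0 = (- inverse a) *s w"
    have "span {x0} \<subseteq> span {w}"
      by (intro span_minimal) (auto simp: x0_def intro: span_neg span_scale span_base)
    moreover have "br x0 u = u + 0 *s x0"
    proof -
      have "br x0 u = (- inverse a) *s (- (a *s u))"
        unfolding x0_def br_scale_left using True ab br_anticomm[of w u] by simp
      also have "\<dots> = (inverse a * a) *s u" by simp
      finally show ?thesis using \<open>a \<noteq> 0\<close> by simp
    qed
    moreover have "x0 \<noteq> 0" using assms \<open>a \<noteq> 0\<close> by (auto simp: x0_def)
    ultimately show ?thesis using that \<open>u \<notin> span {w}\<close> by blast
  qed
qed

lemma ad_identity_mod_line: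
  assumes w0: "w0 \<notin> span {x0}" and r: "br x0 w0 = w0 + r *s x0"
  shows "\<exists>q. br x0 v = v + q *s x0"
proof (cases "v \<in> span {x0, w0}")
  case True
  then obtain a b where v: "v = a *s x0 + b *s w0" by (rule span_pair_combination)
  have "br x0 v = v + (b * r - a) *s x0"
    by (simp add: v br_add_right br_scale_right br_self r algebra_simps)
  then show ?thesis by blast
next
  case False
  obtain c d where cd: "br x0 v = c *s x0 + d *s v"
    using span_pair_combination[OF pair_closed] by blast
  obtain c' d' where cd': "br x0 (v + w0) = c' *s x0 + d' *s (v + w0)"
    using span_pair_combination[OF pair_closed] by blast
  have "br x0 (v + w0) = c *s x0 + d *s v + w0 + r *s x0"
    by (simp add: br_add_right cd r add.assoc)
  with cd' have E: "(d - d') *s v = (c' - c - r) *s x0 + (d' - 1) *s w0"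
    by (simp add: algebra_simps)
  have "d = d'"
  proof (rule ccontr)
    assume "d \<noteq> d'"
    then have "v = inverse (d - d') *s ((c' - c - r) *s x0 + (d' - 1) *s w0)"
      using E by (intro scale_solve) simp_all
    also have "\<dots> \<in> span {x0, w0}" by (intro span_scale combination_in_span_pair)
    finally show False using False by simp
  qed
  have "d' = 1"
  proof (rule ccontr)
    assume "d' \<noteq> 1"
    from E \<open>d = d'\<close> have "(d' - 1) *s w0 = - ((c' - c - r) *s x0)"
      by (simp add: eq_neg_iff_add_eq_0 add.commute)
    then have "w0 = inverse (d' - 1) *s (- ((c' - c - r) *s x0))"
      using \<open>d' \<noteq> 1\<close> by (intro scale_solve) simp_all
    also have "\<dots> \<in> span {x0}" by (intro span_scale span_neg span_base) auto
    finally show False using w0 by simp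
  qed
  then show ?thesis using cd \<open>d = d'\<close> by (metis add.commute scale_one)
qed

definition fixed_space where
  "fixed_space x = {v. br x v = v}"

lemma subspace_fixed_space: "subspace (fixed_space x)"
  unfolding subspace_def fixed_space_def by (simp add: br_add_right br_scale_right)

lemma fixed_space_decomposition:
  assumes "\<And>v. \<exists>q. br x0 v = v + q *s x0"
  shows "\<exists>c. \<exists>a\<in>fixed_space x0. v = c *s x0 + a"
proof -
  obtain q where q: "br x0 v = v + q *s x0" using assms by blast
  have "v + q *s x0 \<in> fixed_space x0"
    by (simp add: fixed_space_def br_add_right br_scale_right br_self q)
  moreover have "v = (- q) *s x0 + (v + q *s x0)" by simp
  ultimately show ?thesis by blast
qed

text \<open>The fixed space is abelian: for fixed a, b, pair closure makes [a,b] fixed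
  too, and then the Jacobi identity for x0, a, b reads [a,b] - [a,b] - [a,b] = 0.\<close>

lemma fixed_space_abelian:
  assumes "a \<in> fixed_space x0" "b \<in> fixed_space x0"
  shows "br a b = 0"
proof -
  have fa: "br x0 a = a" and fb: "br x0 b = b" using assms by (simp_all add: fixed_space_def)
  have "span {a, b} \<subseteq> fixed_space x0"
    using assms subspace_fixed_space by (intro span_minimal) auto
  then have "br x0 (br a b) = br a b"
    using pair_closed by (auto simp: fixed_space_def)
  moreover have "br a (br b x0) = - br a b"
    unfolding br_anticomm[of b x0] fb by (rule br_minus_right)
  moreover have "br b (br x0 a) = - br a b"
    using fa br_anticomm[of b a] by simp
  ultimately have "br a b + - br a b + - br a b = 0"
    using jacobi[of x0 a b] by simp
  then show ?thesis by simp
qed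

text \<open>Being abelian and a complement of F x0, the fixed space is an ideal.\<close>

lemma fixed_space_ideal:
  assumes "\<And>v. \<exists>q. br x0 v = v + q *s x0"
  shows "lie_ideal scale br (fixed_space x0)"
  unfolding lie_ideal_def
proof (intro conjI allI ballI subspace_fixed_space)
  fix y a assume a: "a \<in> fixed_space x0"
  obtain c b where b: "b \<in> fixed_space x0" and y: "y = c *s x0 + b"
    using fixed_space_decomposition[OF assms] by blast
  have "br y a = c *s br x0 a + br b a" unfolding y by (simp only: br_add_left br_scale_left)
  also have "\<dots> = c *s a"
    using a fixed_space_abelian[OF b a] by (simp add: fixed_space_def)
  finally show "br y a \<in> fixed_space x0"
    using subspace_fixed_space a by (simp add: subspace_scale)
qed

theorem nonabelian_structure:
  assumes fin: "finite_dim scale" and nonab: "br u w \<noteq> 0"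
  shows "\<exists>x A. lie_ideal scale br A \<and>
                (\<forall>a\<in>A. \<forall>b\<in>A. br a b = 0) \<and>
                dim A + 1 = dim UNIV \<and>
                x \<notin> A \<and>
                (\<forall>v. \<exists>c. \<exists>a\<in>A. v = c *s x + a) \<and>
                (\<forall>a\<in>A. br x a = a)"
proof -
  obtain x0 w0 r where "x0 \<noteq> 0" and w0: "w0 \<notin> span {x0}" and r: "br x0 w0 = w0 + r *s x0"
    using normalized_pair[OF nonab] .
  have ad: "\<exists>q. br x0 v = v + q *s x0" for v by (rule ad_identity_mod_line[OF w0 r])
  have "x0 \<notin> fixed_space x0" using \<open>x0 \<noteq> 0\<close> by (simp add: fixed_space_def br_self)
  moreover have "dim (fixed_space x0) + 1 = dim UNIV"
    by (rule dim_complement_of_line[OF fin subspace_fixed_space \<open>x0 \<notin> fixed_space x0\<close>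
          fixed_space_decomposition[OF ad]])
  moreover have "\<forall>a\<in>fixed_space x0. br x0 a = a" by (simp add: fixed_space_def)
  ultimately show ?thesis
    using fixed_space_ideal[OF ad] fixed_space_abelian fixed_space_decomposition[OF ad] by blast
qed

end

theorem lemma2p2:
  fixes scale :: "'k::field \<Rightarrow> 'v::ab_group_add \<Rightarrow> 'v"
    and br :: "'v \<Rightarrow> 'v \<Rightarrow> 'v"
  assumes "lie_algebra scale br"
    and "finite_dim scale"
    and "min_generators scale br = vector_space.dim scale (UNIV :: 'v set)"
  shows "(\<forall>x y. br x y = 0) \<or>
         (\<exists>x A. lie_ideal scale br A \<and>
                (\<forall>a\<in>A. \<forall>b\<in>A. br a b = 0) \<and>
                vector_space.dim scale A + 1 = vector_space.dim scale (UNIV :: 'v set) \<and>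
                x \<notin> A \<and>
                (\<forall>v. \<exists>c. \<exists>a\<in>A. v = scale c x + a) \<and>
                (\<forall>a\<in>A. br x a = a))"
proof -
  interpret lie_alg scale br
    using assms(1) unfolding lie_algebra_def lie_alg_def lie_alg_axioms_def by blast
  interpret pair_closed_lie_alg scale br
    by unfold_locales (rule bracket_in_span_pair[OF assms(2,3)])
  show ?thesis
  proof (cases "\<forall>x y. br x y = 0")
    case False
    then obtain u w where "br u w \<noteq> 0" by blast
    then show ?thesis using nonabelian_structure[OF assms(2)] by blast
  qed blast
qed

end
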